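(* Let $P,L\in K\langle\partial_t\rangle$ be monic, with $P\in k(t)[\mathbf x,1/r]\langle\partial_t\rangle$ for some nonzero $r\in k[\mathbf x,t]$ and $L\in k(t)\langle\partial_t\rangle$. Let $\mathbf c\in k^n$ with $r(\mathbf c,t)\neq 0$. (1) If ${\rm gcrd}(P_{\mathbf x=\mathbf c},L)=1$, then ${\rm gcrd}(P,L)=1$. (2) If ${\rm gcrd}(P,L)=1$, then there exists $\mathbf a\in k^n$ with $r(\mathbf a,t)\neq 0$ and ${\rm gcrd}(P_{\mathbf x=\mathbf a},L)=1$.
   Context: $k$ is an algebraically closed field of characteristic zero, $\mathbf x=(x_1,\dots,x_n)$, $K=k(t,x_1,\dots,x_n)$, and $K\langle\partial_t\rangle$ is the ring of linear differential operators in $\partial_t=\partial/\partial t$ with coefficients in $K$; $k(t)[\mathbf x,1/r]\langle\partial_t\rangle$ denotes those operators whose coefficients lie in the subring $k(t)[\mathbf x,1/r]$ of $K$. For such an operator $P$ and $\mathbf c\in k^n$ with $r(\mathbf c,t)\neq0$, $P_{\mathbf x=\mathbf c}\in k(t)\langle\partial_t\rangle$ denotes the operator obtained by substituting $x_i=c_i$ in all coefficients. ${\rm gcrd}(P,L)$ denotes the monic greatest common right divisor of $P$ and $L$ in $K\langle\partial_t\rangle$. *)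

theory Defs
  imports "HOL-Computational_Algebra.Polynomial" "HOL-Computational_Algebra.Fraction_Field"
          "HOL-Library.Poly_Mapping" "HOL-Library.Option_ord"
begin

text \<open>Multivariate polynomials k[t, x_1..x_n]: monomials are finitely supported exponent
  maps on the variables 'n option, where None is the variable t and Some i is x_i.
  The number n of x-variables is CARD('n).\<close>
type_synonym ('k,'n) mpoly = "('n option \<Rightarrow>\<^sub>0 nat) \<Rightarrow>\<^sub>0 'k"

type_synonym ('k,'n) rfun = "('k,'n) mpoly fract"

text \<open>Differential operators in K<d_t>: the polynomial A represents sum_i (coeff A i) d_t^i.\<close>
type_synonym ('k,'n) dop = "('k,'n) rfun poly"

definition mpoly_deriv_t :: "('k::comm_ring_1,'n) mpoly \<Rightarrow> ('k,'n) mpoly" where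
  "mpoly_deriv_t p = (\<Sum>m\<in>Poly_Mapping.keys p.
      Poly_Mapping.single (m - Poly_Mapping.single None 1)
        (Poly_Mapping.lookup p m * of_nat (Poly_Mapping.lookup m None)))"

definition rfun_deriv :: "('k::idom,'n::linorder) rfun \<Rightarrow> ('k,'n) rfun" where
  "rfun_deriv f = (SOME q. \<exists>a b. b \<noteq> 0 \<and> f = Fract a b \<and>
      q = Fract (mpoly_deriv_t a * b - a * mpoly_deriv_t b) (b * b))"

text \<open>Multiplication in the Ore ring K<d_t>, for a derivation D on the coefficients:
  d_t * B = (shift of B) + (D applied to coefficients of B).\<close>
definition d_left :: "('a::comm_ring_1 \<Rightarrow> 'a) \<Rightarrow> 'a poly \<Rightarrow> 'a poly" where
  "d_left D B = pCons 0 B + map_poly D B"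

definition dop_mult :: "('a::comm_ring_1 \<Rightarrow> 'a) \<Rightarrow> 'a poly \<Rightarrow> 'a poly \<Rightarrow> 'a poly" where
  "dop_mult D A B = (\<Sum>i\<le>degree A. smult (coeff A i) ((d_left D ^^ i) B))"

definition right_dvd :: "('a::comm_ring_1 \<Rightarrow> 'a) \<Rightarrow> 'a poly \<Rightarrow> 'a poly \<Rightarrow> bool" where
  "right_dvd D Q A \<longleftrightarrow> (\<exists>R. A = dop_mult D R Q)"

definition is_gcrd :: "('a::comm_ring_1 \<Rightarrow> 'a) \<Rightarrow> 'a poly \<Rightarrow> 'a poly \<Rightarrow> 'a poly \<Rightarrow> bool" where
  "is_gcrd D G A B \<longleftrightarrow> lead_coeff G = 1 \<and> right_dvd D G A \<and> right_dvd D G B \<and>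
     (\<forall>Q. right_dvd D Q A \<and> right_dvd D Q B \<longrightarrow> right_dvd D Q G)"

definition t_poly :: "'k::comm_ring_1 poly \<Rightarrow> ('k,'n) mpoly" where
  "t_poly p = (\<Sum>i\<le>degree p. Poly_Mapping.single (Poly_Mapping.single None i) (coeff p i))"

definition kt_field :: "('k::idom,'n::linorder) rfun set" where
  "kt_field = {Fract (t_poly a) (t_poly b) | a b. b \<noteq> 0}"

definition subst_x :: "('n::finite \<Rightarrow> 'k::comm_ring_1) \<Rightarrow> ('k,'n) mpoly \<Rightarrow> 'k poly" where
  "subst_x c g = (\<Sum>m\<in>Poly_Mapping.keys g.
      monom (Poly_Mapping.lookup g m * (\<Prod>i\<in>UNIV. c i ^ Poly_Mapping.lookup m (Some i)))
            (Poly_Mapping.lookup m None))"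

definition loc_ring :: "('k::idom,'n::linorder) mpoly \<Rightarrow> ('k,'n) rfun set" where
  "loc_ring r = {f. \<exists>g h m. h \<noteq> 0 \<and> f = Fract g (t_poly h * r ^ m)}"

definition spec :: "('k::idom,'n::{finite,linorder}) mpoly \<Rightarrow> ('n \<Rightarrow> 'k) \<Rightarrow> ('k,'n) rfun \<Rightarrow> ('k,'n) rfun" where
  "spec r c f = (SOME q. \<exists>g h m. h \<noteq> 0 \<and> f = Fract g (t_poly h * r ^ m) \<and>
      q = Fract (t_poly (subst_x c g)) (t_poly (h * subst_x c r ^ m)))"

definition spec_dop :: "('k::idom,'n::{finite,linorder}) mpoly \<Rightarrow> ('n \<Rightarrow> 'k) \<Rightarrow> ('k,'n) dop \<Rightarrow> ('k,'n) dop" where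
  "spec_dop r c P = map_poly (spec r c) P"

end

theory Submission
  imports Defs "Jordan_Normal_Form.Determinant"
begin

text \<open>A pair of monic operators A, B has a trivial gcrd iff their differential Sylvester
  matrix, whose columns are the coefficient vectors of the operators d_t^j A (j < deg B) and
  d_t^j B (j < deg A), is nonsingular: a kernel vector is a syzygy U A + V B = 0 with
  deg U < deg B and deg V < deg A, which a Bezout relation X A + Y B = 1 (obtained from
  right division) rules out, and conversely solving the system for the first unit vector
  yields a Bezout relation.

  The entries of the Sylvester matrix of P and L lie in k(t)[x,1/r], on which substitution
  x = c is a ring homomorphism that commutes with d/dt and fixes k(t).  Hence
  det Syl(P_{x=c}, L) = det Syl(P, L) evaluated at x = c, which gives (1).  For (2), write
  det Syl(P, L) = g / (h r^m) with g nonzero and choose a point a with g(a,t) r(a,t) nonzero;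
  it exists because k is infinite (a Kronecker substitution x_i = s^(N^i) reduces this to a
  nonzero univariate polynomial in s).\<close>

section \<open>Operators over a differential field\<close>

lemma smult_sum_right: "Polynomial.smult a (sum f S) = (\<Sum>x\<in>S. Polynomial.smult a (f x))"
  by (induct S rule: infinite_finite_induct) (simp_all add: smult_add_right)

locale differential_field =
  fixes D :: "'a::field \<Rightarrow> 'a"
  assumes D_add: "D (x + y) = D x + D y"
      and D_mult: "D (x * y) = x * D y + D x * y"
begin

lemma D_0 [simp]: "D 0 = 0"
  using D_add[of 0 0] add_left_cancel[of "D 0" "D 0" 0] by simp

lemma D_1 [simp]: "D 1 = 0"
  using D_mult[of 1 1] add_left_cancel[of "D 1" "D 1" 0] by simp

abbreviation dleft where "dleft \<equiv> d_left D"
abbreviation dmult where "dmult \<equiv> dop_mult D"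

lemma coeff_dleft: "coeff (dleft B) k = (if k = 0 then 0 else coeff B (k - 1)) + D (coeff B k)"
  by (simp add: d_left_def coeff_pCons coeff_map_poly split: nat.split)

lemma dleft_add: "dleft (A + B) = dleft A + dleft B"
  by (rule poly_eqI) (simp add: coeff_dleft D_add)

lemma dleft_0 [simp]: "dleft 0 = 0"
  by (rule poly_eqI) (simp add: coeff_dleft)

lemma dleft_smult: "dleft (Polynomial.smult a B) = Polynomial.smult a (dleft B) + Polynomial.smult (D a) B"
  by (rule poly_eqI) (auto simp: coeff_dleft D_mult algebra_simps)

lemma dleft_sum: "dleft (sum f S) = (\<Sum>x\<in>S. dleft (f x))"
  by (induct S rule: infinite_finite_induct) (simp_all add: dleft_add)

lemma dleft_pow_add: "(dleft ^^ i) (A + B) = (dleft ^^ i) A + (dleft ^^ i) B"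
  by (induct i) (simp_all add: dleft_add)

lemma dleft_pow_0 [simp]: "(dleft ^^ i) 0 = 0"
  by (induct i) simp_all

lemma coeff_dleft_pow_above: "degree B + i < k \<Longrightarrow> coeff ((dleft ^^ i) B) k = 0"
proof (induct i arbitrary: k)
  case 0
  then show ?case by (simp add: coeff_eq_0)
next
  case (Suc i)
  then have "k \<noteq> 0" "degree B + i < k - 1" "degree B + i < k" by auto
  with Suc show ?case by (simp add: coeff_dleft)
qed

lemma coeff_dleft_pow_top: "coeff ((dleft ^^ i) B) (degree B + i) = lead_coeff B"
proof (induct i)
  case 0
  then show ?case by simp
next
  case (Suc i)
  have "coeff ((dleft ^^ i) B) (degree B + Suc i) = 0" by (rule coeff_dleft_pow_above) simp
  with Suc show ?case by (simp add: coeff_dleft)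
qed

lemma dleft_pow_1: "(dleft ^^ i) 1 = monom 1 i"
proof (induct i)
  case 0
  then show ?case by (simp add: one_pCons monom_0)
next
  case (Suc i)
  have "map_poly D (monom 1 i) = 0" by (simp add: map_poly_monom)
  then have "dleft (monom 1 i) = pCons 0 (monom 1 i)" by (simp add: d_left_def)
  then have "(dleft ^^ Suc i) 1 = pCons 0 (monom 1 i)" using Suc by simp
  then show ?case by (simp add: monom_Suc)
qed

lemma dop_mult_eq_sum: "degree A < N \<Longrightarrow> dmult A B = (\<Sum>i<N. Polynomial.smult (coeff A i) ((dleft ^^ i) B))"
  unfolding dop_mult_def by (rule sum.mono_neutral_right[symmetric]) (auto simp: coeff_eq_0)

lemma dop_mult_add_left: "dmult (A + A') B = dmult A B + dmult A' B"
proof -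
  define N where "N = Suc (degree A + degree A')"
  have "degree (A + A') < N" using degree_add_le_max[of A A'] unfolding N_def by linarith
  moreover have "degree A < N" "degree A' < N" unfolding N_def by auto
  ultimately show ?thesis
    by (simp add: dop_mult_eq_sum[of _ N] smult_add_left sum.distrib)
qed

lemma dop_mult_0_left [simp]: "dmult 0 B = 0"
  by (simp add: dop_mult_def)

lemma dop_mult_0_right [simp]: "dmult A 0 = 0"
  by (simp add: dop_mult_def)

lemma dop_mult_1_left [simp]: "dmult 1 B = B"
  by (simp add: dop_mult_def)

lemma dop_mult_1_right [simp]: "dmult A 1 = A"
  by (simp add: dop_mult_def dleft_pow_1 smult_monom poly_as_sum_of_monoms)

lemma dop_mult_smult_left: "dmult (Polynomial.smult a A) B = Polynomial.smult a (dmult A B)"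
proof -
  define N where "N = Suc (degree A)"
  have "degree (Polynomial.smult a A) < N" "degree A < N"
    unfolding N_def by (auto simp: le_imp_less_Suc)
  then show ?thesis
    by (simp add: dop_mult_eq_sum[of _ N] smult_sum_right)
qed

lemma dop_mult_minus_left: "dmult (- A) B = - dmult A B"
  using dop_mult_add_left[of A "-A" B] by (simp add: eq_neg_iff_add_eq_0 add.commute)

lemma dop_mult_diff_left: "dmult (A - A') B = dmult A B - dmult A' B"
  using dop_mult_add_left[of A "-A'" B] dop_mult_minus_left[of A' B] by simp

lemma dop_mult_sum_left: "dmult (sum f S) B = (\<Sum>x\<in>S. dmult (f x) B)"
  by (induct S rule: infinite_finite_induct) (simp_all add: dop_mult_add_left)

lemma dop_mult_monom_left: "dmult (monom c j) B = Polynomial.smult c ((dleft ^^ j) B)"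
proof -
  have "degree (monom c j) < Suc j" by (simp add: degree_monom_le le_imp_less_Suc)
  then have "dmult (monom c j) B = (\<Sum>i<Suc j. Polynomial.smult (coeff (monom c j) i) ((dleft ^^ i) B))"
    by (rule dop_mult_eq_sum)
  also have "\<dots> = Polynomial.smult c ((dleft ^^ j) B)"
    by (subst sum.remove[of _ j]) (auto simp: coeff_monom intro!: sum.neutral)
  finally show ?thesis .
qed

lemma dop_mult_add_right: "dmult A (B + B') = dmult A B + dmult A B'"
  by (simp add: dop_mult_def dleft_pow_add smult_add_right sum.distrib)

lemma dleft_dop_mult: "dleft (dmult A B) = dmult (dleft A) B"
proof -
  define N where "N = Suc (degree A)"
  have dA: "degree A < N" unfolding N_def by simp
  have d1: "degree (pCons 0 A) < Suc N" using dA by (cases "A = 0") auto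
  have d2: "degree (map_poly D A) < N" using dA map_poly_degree_leq[of D A] by linarith
  have "dmult (pCons 0 A) B = (\<Sum>i<N. Polynomial.smult (coeff A i) ((dleft ^^ Suc i) B))"
    unfolding dop_mult_eq_sum[OF d1] sum.lessThan_Suc_shift by simp
  moreover have "dmult (map_poly D A) B = (\<Sum>i<N. Polynomial.smult (D (coeff A i)) ((dleft ^^ i) B))"
    by (simp add: dop_mult_eq_sum[OF d2] coeff_map_poly)
  moreover have "dleft (dmult A B) =
      (\<Sum>i<N. Polynomial.smult (coeff A i) ((dleft ^^ Suc i) B) + Polynomial.smult (D (coeff A i)) ((dleft ^^ i) B))"
    by (simp add: dop_mult_eq_sum[OF dA] dleft_sum dleft_smult)
  ultimately show ?thesis
    by (simp add: d_left_def[of D A] dop_mult_add_left sum.distrib)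
qed

lemma dleft_pow_dop_mult: "(dleft ^^ i) (dmult A B) = dmult ((dleft ^^ i) A) B"
  by (induct i) (simp_all add: dleft_dop_mult)

lemma dop_mult_assoc: "dmult (dmult A B) C = dmult A (dmult B C)"
  by (simp add: dop_mult_def[of D A] dop_mult_sum_left dop_mult_smult_left dleft_pow_dop_mult)

lemma coeff_dop_mult_above: "degree A + degree B < k \<Longrightarrow> coeff (dmult A B) k = 0"
  by (auto simp: dop_mult_def coeff_sum intro!: sum.neutral coeff_dleft_pow_above)

lemma coeff_dop_mult_top: "coeff (dmult A B) (degree A + degree B) = lead_coeff A * lead_coeff B"
proof -
  have "coeff (dmult A B) (degree A + degree B) =
        (\<Sum>i\<le>degree A. coeff A i * coeff ((dleft ^^ i) B) (degree A + degree B))"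
    by (simp add: dop_mult_def coeff_sum)
  also have "\<dots> = lead_coeff A * lead_coeff B"
  proof (subst sum.remove[of _ "degree A"])
    show "coeff A (degree A) * coeff ((dleft ^^ degree A) B) (degree A + degree B) +
      (\<Sum>i\<in>{..degree A} - {degree A}. coeff A i * coeff ((dleft ^^ i) B) (degree A + degree B)) =
      lead_coeff A * lead_coeff B"
      using coeff_dleft_pow_top[of "degree A" B]
      by (auto simp: add.commute coeff_dleft_pow_above intro!: sum.neutral)
  qed auto
  finally show ?thesis .
qed

lemma degree_dop_mult: "A \<noteq> 0 \<Longrightarrow> B \<noteq> 0 \<Longrightarrow> degree (dmult A B) = degree A + degree B"
  by (rule antisym) (auto intro!: degree_le le_degree simp: coeff_dop_mult_above coeff_dop_mult_top)

lemma lead_coeff_dop_mult: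
  "A \<noteq> 0 \<Longrightarrow> B \<noteq> 0 \<Longrightarrow> lead_coeff (dmult A B) = lead_coeff A * lead_coeff B"
  by (simp add: degree_dop_mult coeff_dop_mult_top)

lemma dop_mult_eq_0_iff: "dmult A B = 0 \<longleftrightarrow> A = 0 \<or> B = 0"
proof -
  have "A \<noteq> 0 \<Longrightarrow> B \<noteq> 0 \<Longrightarrow> dmult A B \<noteq> 0"
    using lead_coeff_dop_mult[of A B] by auto
  then show ?thesis by auto
qed

lemma right_division:
  "B \<noteq> 0 \<Longrightarrow> \<exists>Q R. A = dmult Q B + R \<and> (R = 0 \<or> degree R < degree B)"
proof (induct "degree A" arbitrary: A rule: less_induct)
  case less
  show ?case
  proof (cases "A = 0 \<or> degree A < degree B")
    case True
    then show ?thesis by (intro exI[of _ 0] exI[of _ A]) auto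
  next
    case False
    then have A0: "A \<noteq> 0" and dg: "degree B \<le> degree A" by auto
    define Q0 where "Q0 = monom (lead_coeff A / lead_coeff B) (degree A - degree B)"
    define A' where "A' = A - dmult Q0 B"
    have lA: "lead_coeff A \<noteq> 0" "lead_coeff B \<noteq> 0" using A0 less.prems by auto
    then have Q0: "Q0 \<noteq> 0" "degree Q0 = degree A - degree B"
      "lead_coeff Q0 = lead_coeff A / lead_coeff B"
      unfolding Q0_def by (auto simp: degree_monom_eq)
    have dM: "degree (dmult Q0 B) = degree A"
      using degree_dop_mult[OF Q0(1) less.prems] Q0 dg by simp
    have lM: "lead_coeff (dmult Q0 B) = lead_coeff A"
      using lead_coeff_dop_mult[OF Q0(1) less.prems] Q0 lA by simp
    have dA': "degree A' < degree A" if "A' \<noteq> 0"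
    proof -
      have "degree A' \<le> degree A"
        unfolding A'_def using degree_diff_le_max[of A "dmult Q0 B"] dM by simp
      moreover have "coeff A' (degree A) = 0" unfolding A'_def using lM dM by simp
      ultimately show ?thesis using that by (metis le_neq_implies_less leading_coeff_0_iff)
    qed
    show ?thesis
    proof (cases "A' = 0")
      case True
      then show ?thesis unfolding A'_def by (intro exI[of _ Q0] exI[of _ 0]) simp
    next
      case False
      obtain Q R where QR: "A' = dmult Q B + R" "R = 0 \<or> degree R < degree B"
        using less.hyps[OF dA'[OF False] less.prems] by blast
      then have "A = dmult (Q0 + Q) B + R"
        unfolding A'_def by (simp add: dop_mult_add_left algebra_simps)
      with QR(2) show ?thesis by blast
    qed
  qed
qed

lemma right_divisor_of_left_combinations:
  assumes "A \<noteq> 0 \<or> B \<noteq> 0"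
  obtains G X0 Y0 where "G = dmult X0 A + dmult Y0 B"
    and "\<And>X Y. right_dvd D G (dmult X A + dmult Y B)"
proof -
  \<comment> \<open>a nonzero left combination of minimal degree; a remainder of smaller degree would contradict
    minimality\<close>
  define J where "J = {G. G \<noteq> 0 \<and> (\<exists>X Y. G = dmult X A + dmult Y B)}"
  have "A = dmult 1 A + dmult 0 B" "B = dmult 0 A + dmult 1 B" by simp_all
  then have "A \<in> J \<or> B \<in> J" unfolding J_def using assms by blast
  then obtain G where GJ: "G \<in> J" and G_min: "\<And>G'. G' \<in> J \<Longrightarrow> degree G \<le> degree G'"
    using ex_has_least_nat[of "\<lambda>G. G \<in> J" _ degree] by blast
  from GJ obtain X0 Y0 where G: "G \<noteq> 0" "G = dmult X0 A + dmult Y0 B" unfolding J_def by blast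
  have "right_dvd D G (dmult X A + dmult Y B)" for X Y
  proof -
    obtain Q R where QR: "dmult X A + dmult Y B = dmult Q G + R" "R = 0 \<or> degree R < degree G"
      using right_division[OF G(1)] by blast
    have "R = dmult (X - dmult Q X0) A + dmult (Y - dmult Q Y0) B"
      using QR(1) G(2) by (simp add: dop_mult_diff_left dop_mult_add_right dop_mult_assoc algebra_simps)
    then have "R = 0 \<or> R \<in> J" unfolding J_def by blast
    then have "R = 0" using QR(2) G_min[of R] by auto
    then show ?thesis using QR(1) unfolding right_dvd_def by auto
  qed
  with G(2) show ?thesis by (rule that)
qed

lemma gcrd_one_iff_bezout: "is_gcrd D 1 A B \<longleftrightarrow> (\<exists>X Y. dmult X A + dmult Y B = 1)"
proof
  assume gcrd: "is_gcrd D 1 A B"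
  show "\<exists>X Y. dmult X A + dmult Y B = 1"
  proof (cases "A = 0 \<and> B = 0")
    case True
    then have "right_dvd D 0 A" "right_dvd D 0 B" by (auto simp: right_dvd_def)
    with gcrd have "right_dvd D 0 1" unfolding is_gcrd_def by blast
    then show ?thesis by (simp add: right_dvd_def)
  next
    case False
    then have "A \<noteq> 0 \<or> B \<noteq> 0" by blast
    then obtain G X0 Y0 where G: "G = dmult X0 A + dmult Y0 B"
      and G_dvd: "\<And>X Y. right_dvd D G (dmult X A + dmult Y B)"
      by (rule right_divisor_of_left_combinations) auto
    have "right_dvd D G 1"
      using gcrd G_dvd[of 1 0] G_dvd[of 0 1] unfolding is_gcrd_def by simp
    then obtain S where "1 = dmult S G" unfolding right_dvd_def by blast
    then have "1 = dmult (dmult S X0) A + dmult (dmult S Y0) B"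
      using G by (simp add: dop_mult_add_right dop_mult_assoc)
    then show ?thesis by metis
  qed
next
  assume "\<exists>X Y. dmult X A + dmult Y B = 1"
  then obtain X Y where bezout: "dmult X A + dmult Y B = 1" by blast
  show "is_gcrd D 1 A B"
    unfolding is_gcrd_def
  proof (intro conjI allI impI)
    show "right_dvd D 1 A" "right_dvd D 1 B" unfolding right_dvd_def by auto
    fix Q assume "right_dvd D Q A \<and> right_dvd D Q B"
    then obtain R1 R2 where "A = dmult R1 Q" "B = dmult R2 Q" unfolding right_dvd_def by blast
    then have "1 = dmult (dmult X R1 + dmult Y R2) Q"
      using bezout by (simp add: dop_mult_add_left dop_mult_assoc)
    then show "right_dvd D Q 1" unfolding right_dvd_def by blast
  qed simp
qed

lemma bezout_syzygy_zero_step: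
  assumes IH: "\<And>A B X Y U V. degree A + degree B < n \<Longrightarrow> A \<noteq> 0 \<Longrightarrow> B \<noteq> 0 \<Longrightarrow>
        dmult X A + dmult Y B = 1 \<Longrightarrow> dmult U A + dmult V B = 0 \<Longrightarrow>
        (U = 0 \<or> degree U < degree B) \<Longrightarrow> (V = 0 \<or> degree V < degree A) \<Longrightarrow> U = 0 \<and> V = 0"
    and n: "degree A + degree B = n" and le: "degree B \<le> degree A"
    and A0: "A \<noteq> 0" and B0: "B \<noteq> 0"
    and bezout: "dmult X A + dmult Y B = 1" and syzygy: "dmult U A + dmult V B = 0"
    and dU: "U = 0 \<or> degree U < degree B"
  shows "U = 0 \<and> V = 0"
proof -
  obtain Q R where QR: "A = dmult Q B + R" "R = 0 \<or> degree R < degree B"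
    using right_division[OF B0] by blast
  show ?thesis
  proof (cases "R = 0")
    case True
    then have unit: "1 = dmult (dmult X Q + Y) B"
      using bezout QR(1) by (simp add: dop_mult_add_left dop_mult_assoc)
    then have "dmult X Q + Y \<noteq> 0" by auto
    with unit have "degree B = 0" using degree_dop_mult[OF _ B0] by (metis add_is_0 degree_1)
    then have U0: "U = 0" using dU by simp
    then have "dmult V B = 0" using syzygy by simp
    then show ?thesis using U0 B0 by (simp add: dop_mult_eq_0_iff)
  next
    case False
    then have dR: "degree R < degree B" using QR(2) by simp
    define U' where "U' = dmult U Q + V"
    have syzygy': "dmult U' B + dmult U R = 0"
      using syzygy QR(1) unfolding U'_def
      by (simp add: dop_mult_add_left dop_mult_add_right dop_mult_assoc add_ac)
    have bezout': "dmult (dmult X Q + Y) B + dmult X R = 1"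
      using bezout QR(1) by (simp add: dop_mult_add_left dop_mult_add_right dop_mult_assoc add_ac)
    have dU': "U' = 0 \<or> degree U' < degree R"
    proof (cases "U' = 0 \<or> U = 0")
      case True
      then show ?thesis using syzygy' B0 by (auto simp: dop_mult_eq_0_iff)
    next
      case nz: False
      have "degree (dmult U' B) = degree (dmult U R)"
        using syzygy' by (metis add_eq_0_iff degree_minus)
      then have "degree U' + degree B = degree U + degree R"
        using nz B0 \<open>R \<noteq> 0\<close> by (simp add: degree_dop_mult)
      then show ?thesis using dU nz by simp
    qed
    have "U' = 0 \<and> U = 0"
      by (rule IH[OF _ B0 \<open>R \<noteq> 0\<close> bezout' syzygy' dU' dU]) (use n le dR in simp)
    then show ?thesis unfolding U'_def by auto
  qed
qed

lemma bezout_syzygy_zero: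
  "A \<noteq> 0 \<Longrightarrow> B \<noteq> 0 \<Longrightarrow> dmult X A + dmult Y B = 1 \<Longrightarrow> dmult U A + dmult V B = 0 \<Longrightarrow>
   (U = 0 \<or> degree U < degree B) \<Longrightarrow> (V = 0 \<or> degree V < degree A) \<Longrightarrow> U = 0 \<and> V = 0"
proof (induct "degree A + degree B" arbitrary: A B X Y U V rule: less_induct)
  case less
  show ?case
  proof (cases "degree B \<le> degree A")
    case True
    show ?thesis by (rule bezout_syzygy_zero_step[OF less.hyps refl True less.prems(1-5)]) auto
  next
    case False
    have bezout: "dmult Y B + dmult X A = 1" and syzygy: "dmult V B + dmult U A = 0"
      using less.prems(3,4) by (simp_all add: add.commute)
    have "V = 0 \<and> U = 0"
      by (rule bezout_syzygy_zero_step[OF less.hyps _ _ less.prems(2,1) bezout syzygy less.prems(6)])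
         (use False in \<open>auto simp: add.commute\<close>)
    then show ?thesis by simp
  qed
qed

end

definition diff_sylvester :: "('a::comm_ring_1 \<Rightarrow> 'a) \<Rightarrow> 'a poly \<Rightarrow> 'a poly \<Rightarrow> 'a mat" where
  "diff_sylvester D A B = mat (degree A + degree B) (degree A + degree B)
    (\<lambda>(k, j). coeff (if j < degree B then (d_left D ^^ j) A else (d_left D ^^ (j - degree B)) B) k)"

definition segment_poly :: "'a::comm_ring_1 vec \<Rightarrow> nat \<Rightarrow> nat \<Rightarrow> 'a poly" where
  "segment_poly v s l = (\<Sum>j<l. monom (v $ (s + j)) j)"

lemma coeff_segment_poly: "coeff (segment_poly v s l) j = (if j < l then v $ (s + j) else 0)"
  by (simp add: segment_poly_def coeff_sum coeff_monom)

lemma zero_or_degree_less: "(\<And>k. n \<le> k \<Longrightarrow> coeff P k = 0) \<Longrightarrow> P = 0 \<or> degree P < n"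
  by (metis leading_coeff_0_iff not_le)

lemma diff_sylvester_carrier:
  "diff_sylvester D A B \<in> carrier_mat (degree A + degree B) (degree A + degree B)"
  by (simp add: diff_sylvester_def)

context differential_field
begin

abbreviation sylvester_combination :: "'a vec \<Rightarrow> 'a poly \<Rightarrow> 'a poly \<Rightarrow> 'a poly" where
  "sylvester_combination v A B \<equiv>
     dmult (segment_poly v 0 (degree B)) A + dmult (segment_poly v (degree B) (degree A)) B"

lemma dop_mult_segment_poly:
  "dmult (segment_poly v s l) A = (\<Sum>j<l. Polynomial.smult (v $ (s + j)) ((dleft ^^ j) A))"
  by (simp add: segment_poly_def dop_mult_sum_left dop_mult_monom_left)

lemma coeff_sylvester_combination:
  assumes v: "v \<in> carrier_vec (degree A + degree B)"
  shows "coeff (sylvester_combination v A B) k =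
    (if k < degree A + degree B then (diff_sylvester D A B *\<^sub>v v) $ k else 0)"
proof -
  let ?l = "degree B" and ?p = "degree A"
  have comb: "coeff (sylvester_combination v A B) k =
    (\<Sum>j<?l. v $ j * coeff ((dleft ^^ j) A) k) + (\<Sum>j<?p. v $ (?l + j) * coeff ((dleft ^^ j) B) k)"
    by (simp add: dop_mult_segment_poly coeff_sum)
  show ?thesis
  proof (cases "k < ?p + ?l")
    case True
    let ?f = "\<lambda>j. coeff (if j < ?l then (dleft ^^ j) A else (dleft ^^ (j - ?l)) B) k * v $ j"
    have "(diff_sylvester D A B *\<^sub>v v) $ k = (\<Sum>j = 0..<?p + ?l. ?f j)"
      using v True by (simp add: diff_sylvester_def scalar_prod_def)
    also have "\<dots> = (\<Sum>j = 0..<?l. ?f j) + (\<Sum>j = 0..<?p. ?f (j + ?l))"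
      using sum.atLeastLessThan_concat[of 0 ?l "?p + ?l" ?f] sum.shift_bounds_nat_ivl[of ?f 0 ?l ?p]
      by simp
    also have "\<dots> = coeff (sylvester_combination v A B) k"
      unfolding comb by (auto simp: atLeast0LessThan mult.commute add.commute intro!: sum.cong)
    finally show ?thesis using True by simp
  next
    case False
    have "(\<Sum>j<?l. v $ j * coeff ((dleft ^^ j) A) k) = 0"
      by (rule sum.neutral) (use False in \<open>auto intro!: coeff_dleft_pow_above\<close>)
    moreover have "(\<Sum>j<?p. v $ (?l + j) * coeff ((dleft ^^ j) B) k) = 0"
      by (rule sum.neutral) (use False in \<open>auto intro!: coeff_dleft_pow_above\<close>)
    ultimately show ?thesis using False comb by simp
  qed
qed

lemma det_diff_sylvester_nonzero:
  assumes A0: "A \<noteq> 0" and B0: "B \<noteq> 0" and bezout: "dmult X A + dmult Y B = 1"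
  shows "det (diff_sylvester D A B) \<noteq> 0"
proof
  let ?l = "degree B" and ?p = "degree A" and ?n = "degree A + degree B"
  assume "det (diff_sylvester D A B) = 0"
  then obtain v where v: "v \<in> carrier_vec ?n" "v \<noteq> 0\<^sub>v ?n" "diff_sylvester D A B *\<^sub>v v = 0\<^sub>v ?n"
    using det_0_iff_vec_prod_zero[OF diff_sylvester_carrier] by blast
  have "coeff (sylvester_combination v A B) k = 0" for k
    using v by (simp only: coeff_sylvester_combination[OF v(1)]) simp
  then have "sylvester_combination v A B = 0" by (intro poly_eqI) simp
  then have "segment_poly v 0 ?l = 0 \<and> segment_poly v ?l ?p = 0"
    by (intro bezout_syzygy_zero[OF A0 B0 bezout])
       (auto intro!: zero_or_degree_less simp: coeff_segment_poly)
  then have z: "segment_poly v 0 ?l = 0" "segment_poly v ?l ?p = 0" by auto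
  have "v $ i = 0" if "i < ?n" for i
  proof (cases "i < ?l")
    case True
    then show ?thesis using arg_cong[OF z(1), of "\<lambda>P. coeff P i"] by (simp add: coeff_segment_poly)
  next
    case False
    then show ?thesis
      using that arg_cong[OF z(2), of "\<lambda>P. coeff P (i - ?l)"]
      by (auto simp: coeff_segment_poly split: if_splits)
  qed
  then have "v = 0\<^sub>v ?n" using v(1) by (intro eq_vecI) auto
  with v(2) show False by simp
qed

lemma bezout_if_det_diff_sylvester_nonzero:
  assumes A1: "lead_coeff A = 1" and B0: "B \<noteq> 0" and det: "det (diff_sylvester D A B) \<noteq> 0"
  shows "\<exists>U V. dmult U A + dmult V B = 1"
proof (cases "degree A + degree B = 0")
  case True
  then have "A = 1" using A1 by (metis add_is_0 degree_0_id one_pCons)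
  then show ?thesis by (intro exI[of _ 1] exI[of _ 0]) simp
next
  case False
  let ?n = "degree A + degree B"
  \<comment> \<open>solve the Sylvester system for the first unit vector\<close>
  obtain M' where M': "M' \<in> carrier_mat ?n ?n" "diff_sylvester D A B * M' = 1\<^sub>m ?n"
    using det_non_zero_imp_unit[OF diff_sylvester_carrier det]
    unfolding Units_def ring_mat_def by auto
  define v where "v = M' *\<^sub>v unit_vec ?n 0"
  have v: "v \<in> carrier_vec ?n" unfolding v_def using M'(1) by simp
  have "diff_sylvester D A B *\<^sub>v v = unit_vec ?n 0"
    unfolding v_def using M'
    by (simp add: assoc_mult_mat_vec[symmetric, OF diff_sylvester_carrier M'(1)])
  then have "coeff (sylvester_combination v A B) k = coeff 1 k" for k
    using False by (simp only: coeff_sylvester_combination[OF v]) (simp add: coeff_1)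
  then have "sylvester_combination v A B = 1" by (rule poly_eqI)
  then show ?thesis by blast
qed

theorem gcrd_one_iff_det_nonzero:
  assumes "lead_coeff A = 1" and "lead_coeff B = 1"
  shows "is_gcrd D 1 A B \<longleftrightarrow> det (diff_sylvester D A B) \<noteq> 0"
  using assms det_diff_sylvester_nonzero bezout_if_det_diff_sylvester_nonzero gcrd_one_iff_bezout
  by (metis one_neq_zero leading_coeff_0_iff)

end

section \<open>Polynomials in t and x\<close>

lemma poly_mapping_sum_single:
  "(p :: 'a \<Rightarrow>\<^sub>0 'b::comm_monoid_add) =
     (\<Sum>m\<in>Poly_Mapping.keys p. Poly_Mapping.single m (Poly_Mapping.lookup p m))"
proof (rule poly_mapping_eqI)
  fix k
  show "Poly_Mapping.lookup p k =
      Poly_Mapping.lookup (\<Sum>m\<in>Poly_Mapping.keys p. Poly_Mapping.single m (Poly_Mapping.lookup p m)) k"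
    by (cases "k \<in> Poly_Mapping.keys p") (auto simp: lookup_sum lookup_single when_def in_keys_iff)
qed

lemma poly_mapping_induct [case_names zero single add]:
  assumes "P 0" "\<And>m a. P (Poly_Mapping.single m a)" "\<And>p q. P p \<Longrightarrow> P q \<Longrightarrow> P (p + q)"
  shows "P (p :: 'a \<Rightarrow>\<^sub>0 'b::comm_monoid_add)"
proof -
  have "P (\<Sum>m\<in>S. Poly_Mapping.single m (Poly_Mapping.lookup p m))" if "finite S" for S
    using that by (induct S rule: finite_induct) (auto intro: assms)
  then show ?thesis by (subst poly_mapping_sum_single) simp
qed

lemma mpoly_deriv_t_add:
  "mpoly_deriv_t (p + q :: ('k::comm_ring_1,'n) mpoly) = mpoly_deriv_t p + mpoly_deriv_t q"
  unfolding mpoly_deriv_t_def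
  by (rule setsum_keys_plus_distrib) (simp_all add: distrib_right single_add)

lemma mpoly_deriv_t_0 [simp]: "mpoly_deriv_t (0 :: ('k::comm_ring_1,'n) mpoly) = 0"
  by (simp add: mpoly_deriv_t_def)

lemma mpoly_deriv_t_single:
  "mpoly_deriv_t (Poly_Mapping.single m a :: ('k::comm_ring_1,'n) mpoly) =
     Poly_Mapping.single (m - Poly_Mapping.single None 1) (a * of_nat (Poly_Mapping.lookup m None))"
  by (cases "a = 0") (simp_all add: mpoly_deriv_t_def)

lemma mpoly_deriv_t_mult_single:
  fixes m n :: "'n option \<Rightarrow>\<^sub>0 nat"
  defines "dt \<equiv> Poly_Mapping.single (None :: 'n option) (1::nat)"
  shows "mpoly_deriv_t (Poly_Mapping.single m a * Poly_Mapping.single n b :: ('k::comm_ring_1,'n) mpoly) =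
     Poly_Mapping.single m a * mpoly_deriv_t (Poly_Mapping.single n b) +
     mpoly_deriv_t (Poly_Mapping.single m a) * Poly_Mapping.single n b"
proof -
  \<comment> \<open>lowering the t-exponent of n commutes with adding m, unless that exponent is 0
    and the coefficient vanishes anyway\<close>
  have shift: "Poly_Mapping.single (m + (n - dt)) (e * of_nat (Poly_Mapping.lookup n None)) =
      Poly_Mapping.single ((m + n) - dt) (e * of_nat (Poly_Mapping.lookup n None) :: 'k)"
    for m n :: "'n option \<Rightarrow>\<^sub>0 nat" and e
  proof (cases "Poly_Mapping.lookup n None = 0")
    case False
    then have "m + (n - dt) = (m + n) - dt"
      unfolding dt_def by (intro poly_mapping_eqI) (auto simp: lookup_add lookup_minus lookup_single when_def)
    then show ?thesis by simp
  qed simp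
  have "Poly_Mapping.single m a * mpoly_deriv_t (Poly_Mapping.single n b) =
      Poly_Mapping.single ((m + n) - dt) ((a * b) * of_nat (Poly_Mapping.lookup n None))"
    using shift[of m n "a * b"] by (simp add: dt_def mpoly_deriv_t_single mult_single mult.assoc)
  moreover have "mpoly_deriv_t (Poly_Mapping.single m a) * Poly_Mapping.single n b =
      Poly_Mapping.single ((m + n) - dt) ((a * b) * of_nat (Poly_Mapping.lookup m None))"
    using shift[of n m "a * b"] by (simp add: dt_def mpoly_deriv_t_single mult_single add.commute mult_ac)
  ultimately show ?thesis
    by (simp add: dt_def mpoly_deriv_t_single mult_single lookup_add single_add[symmetric]
        distrib_left add_ac)
qed

lemma mpoly_deriv_t_mult:
  "mpoly_deriv_t (p * q :: ('k::comm_ring_1,'n) mpoly) = p * mpoly_deriv_t q + mpoly_deriv_t p * q"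
proof (induct p rule: poly_mapping_induct)
  case (single m a)
  show ?case
    by (induct q rule: poly_mapping_induct)
       (simp_all add: mpoly_deriv_t_mult_single distrib_left distrib_right mpoly_deriv_t_add)
qed (simp_all add: distrib_left distrib_right mpoly_deriv_t_add)

abbreviation t_var :: "('k::comm_ring_1,'n) mpoly" where
  "t_var \<equiv> Poly_Mapping.single (Poly_Mapping.single None 1) 1"

lemma t_poly_eq_sum:
  "degree p < N \<Longrightarrow>
     (t_poly p :: ('k::comm_ring_1,'n) mpoly) = (\<Sum>i<N. Poly_Mapping.single (Poly_Mapping.single None i) (coeff p i))"
  unfolding t_poly_def by (rule sum.mono_neutral_right[symmetric]) (auto simp: coeff_eq_0)

lemma t_poly_0 [simp]: "t_poly 0 = 0"
  by (simp add: t_poly_def)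

lemma t_poly_add: "(t_poly (p + q) :: ('k::comm_ring_1,'n) mpoly) = t_poly p + t_poly q"
proof -
  define N where "N = Suc (degree p + degree q)"
  have "degree (p + q) < N" using degree_add_le_max[of p q] unfolding N_def by linarith
  moreover have "degree p < N" "degree q < N" unfolding N_def by auto
  ultimately show ?thesis by (simp add: t_poly_eq_sum[of _ N] single_add sum.distrib)
qed

lemma t_poly_smult:
  "(t_poly (Polynomial.smult a p) :: ('k::comm_ring_1,'n) mpoly) = Poly_Mapping.single 0 a * t_poly p"
proof -
  define N where "N = Suc (degree p)"
  have "degree (Polynomial.smult a p) < N" "degree p < N"
    unfolding N_def using degree_smult_le[of a p] by auto
  then show ?thesis by (simp add: t_poly_eq_sum[of _ N] sum_distrib_left mult_single)
qed

lemma t_poly_pCons: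
  "(t_poly (pCons a q) :: ('k::comm_ring_1,'n) mpoly) = Poly_Mapping.single 0 a + t_var * t_poly q"
proof -
  define M where "M = Suc (degree q)"
  have d1: "degree (pCons a q) < Suc M" unfolding M_def using degree_pCons_le[of a q] by linarith
  have d2: "degree q < M" unfolding M_def by simp
  have shift: "t_var * Poly_Mapping.single (Poly_Mapping.single None i) c =
      Poly_Mapping.single (Poly_Mapping.single None (Suc i)) (c :: 'k)" for i c
    by (simp add: mult_single single_add[symmetric])
  show ?thesis
    unfolding t_poly_eq_sum[OF d1] t_poly_eq_sum[OF d2] sum.lessThan_Suc_shift sum_distrib_left shift
    by simp
qed

lemma t_poly_mult: "(t_poly (p * q) :: ('k::comm_ring_1,'n) mpoly) = t_poly p * t_poly q"
proof (induct p rule: pCons_induct)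
  case (pCons a p)
  have "(t_poly (pCons a p * q) :: ('k,'n) mpoly) = t_poly (Polynomial.smult a q + pCons 0 (p * q))"
    by simp
  also have "\<dots> = Poly_Mapping.single 0 a * t_poly q + t_var * (t_poly p * t_poly q)"
    by (simp add: t_poly_add t_poly_smult t_poly_pCons pCons.hyps)
  also have "\<dots> = t_poly (pCons a p) * t_poly q"
    by (simp add: t_poly_pCons algebra_simps)
  finally show ?case .
qed simp

lemma t_poly_1 [simp]: "(t_poly 1 :: ('k::comm_ring_1,'n) mpoly) = 1"
  using t_poly_pCons[of "1::'k" 0, where 'n='n] by (simp add: one_pCons)

lemma t_poly_minus: "(t_poly (- p) :: ('k::comm_ring_1,'n) mpoly) = - t_poly p"
  using t_poly_add[of p "-p", where 'n='n] by (simp add: eq_neg_iff_add_eq_0 add.commute)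

lemma t_poly_diff: "(t_poly (p - q) :: ('k::comm_ring_1,'n) mpoly) = t_poly p - t_poly q"
  by (simp only: diff_conv_add_uminus t_poly_add t_poly_minus)

lemma mpoly_deriv_t_t_poly: "mpoly_deriv_t (t_poly p :: ('k::idom,'n) mpoly) = t_poly (pderiv p)"
proof (induct p rule: pCons_induct)
  case (pCons a q)
  have "mpoly_deriv_t (Poly_Mapping.single 0 a :: ('k,'n) mpoly) = 0"
    "mpoly_deriv_t (t_var :: ('k,'n) mpoly) = 1"
    by (simp_all add: mpoly_deriv_t_single)
  then have "mpoly_deriv_t (t_poly (pCons a q) :: ('k,'n) mpoly) = t_var * t_poly (pderiv q) + t_poly q"
    by (simp add: t_poly_pCons mpoly_deriv_t_add mpoly_deriv_t_mult pCons.hyps)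
  also have "\<dots> = t_poly (pderiv (pCons a q))"
    by (simp add: pderiv_pCons t_poly_add t_poly_pCons)
  finally show ?case .
qed (simp add: pderiv_0)

definition monomial_value :: "('n::finite \<Rightarrow> 'k::comm_ring_1) \<Rightarrow> ('n option \<Rightarrow>\<^sub>0 nat) \<Rightarrow> 'k" where
  "monomial_value c m = (\<Prod>i\<in>UNIV. c i ^ Poly_Mapping.lookup m (Some i))"

lemma subst_x_add: "subst_x c (p + q) = subst_x c p + subst_x c q"
  unfolding subst_x_def by (rule setsum_keys_plus_distrib) (simp_all add: distrib_right add_monom)

lemma subst_x_0 [simp]: "subst_x c 0 = 0"
  by (simp add: subst_x_def)

lemma subst_x_single:
  "subst_x c (Poly_Mapping.single m a) = monom (a * monomial_value c m) (Poly_Mapping.lookup m None)"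
  by (cases "a = 0") (simp_all add: subst_x_def monomial_value_def)

lemma monomial_value_add: "monomial_value c (m + n) = monomial_value c m * monomial_value c n"
  by (simp add: monomial_value_def lookup_add power_add prod.distrib)

lemma subst_x_mult: "subst_x c (p * q) = subst_x c p * subst_x c q"
proof (induct p rule: poly_mapping_induct)
  case (single m a)
  show ?case
  proof (induct q rule: poly_mapping_induct)
    case (single n b)
    then show ?case
      by (simp add: mult_single subst_x_single monomial_value_add mult_monom lookup_add mult_ac)
  qed (simp_all add: distrib_left subst_x_add)
qed (simp_all add: distrib_right subst_x_add)

lemma subst_x_1 [simp]: "subst_x c 1 = 1"
  using subst_x_single[of c 0 1] by (simp add: monomial_value_def monom_0)

lemma subst_x_minus: "subst_x c (- p) = - subst_x c p"
  using subst_x_add[of c p "-p"] by (simp add: eq_neg_iff_add_eq_0 add.commute)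

lemma subst_x_diff: "subst_x c (p - q) = subst_x c p - subst_x c q"
  by (simp only: diff_conv_add_uminus subst_x_add subst_x_minus)

lemma subst_x_power: "subst_x c (p ^ m) = subst_x c p ^ m"
  by (induct m) (simp_all add: subst_x_mult)

lemma subst_x_t_poly: "subst_x c (t_poly h :: ('k::comm_ring_1,'n::finite) mpoly) = h"
proof (induct h rule: pCons_induct)
  case (pCons a q)
  have "subst_x c (Poly_Mapping.single 0 a :: ('k,'n) mpoly) = [:a:]"
    "subst_x c (t_var :: ('k,'n) mpoly) = monom 1 1"
    by (simp_all add: subst_x_single monomial_value_def monom_0 lookup_single)
  then have "subst_x c (t_poly (pCons a q) :: ('k,'n) mpoly) = [:a:] + monom 1 1 * q"
    by (simp add: t_poly_pCons subst_x_add subst_x_mult pCons.hyps)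
  also have "\<dots> = pCons a q"
    by (rule poly_eqI) (simp add: coeff_monom_mult coeff_pCons split: nat.split)
  finally show ?case .
qed simp

lemma t_poly_eq_0_iff: "(t_poly h :: ('k::comm_ring_1,'n::finite) mpoly) = 0 \<longleftrightarrow> h = 0"
  by (metis subst_x_0 subst_x_t_poly t_poly_0)

lemma subst_x_mpoly_deriv_t:
  "subst_x c (mpoly_deriv_t g :: ('k::idom,'n::finite) mpoly) = pderiv (subst_x c g)"
proof (induct g rule: poly_mapping_induct)
  case (single m a)
  have "monomial_value c (m - Poly_Mapping.single None 1) = monomial_value c m"
    by (simp add: monomial_value_def lookup_minus lookup_single)
  then show ?case
    by (simp add: mpoly_deriv_t_single subst_x_single pderiv_monom lookup_minus lookup_single mult_ac)
qed (simp_all add: pderiv_0 mpoly_deriv_t_add subst_x_add pderiv_add)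

lemma base_expansion_inj:
  "(\<forall>t<n. d t < (N::nat)) \<Longrightarrow> (\<forall>t<n. d' t < N) \<Longrightarrow>
   (\<Sum>t<n. d t * N ^ t) = (\<Sum>t<n. d' t * N ^ t) \<Longrightarrow> \<forall>t<n. d t = d' t"
proof (induct n arbitrary: d d')
  case (Suc n)
  let ?X = "\<Sum>t<n. d (Suc t) * N ^ t" and ?X' = "\<Sum>t<n. d' (Suc t) * N ^ t"
  have split: "(\<Sum>t<Suc n. e t * N ^ t) = e 0 + N * (\<Sum>t<n. e (Suc t) * N ^ t)" for e
    unfolding sum.lessThan_Suc_shift by (simp add: sum_distrib_left mult_ac)
  have digit: "d 0 < N" "d' 0 < N" using Suc.prems by auto
  have eq: "d 0 + N * ?X = d' 0 + N * ?X'" using Suc.prems(3) unfolding split .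
  have "(d 0 + N * ?X) mod N = d 0" "(d' 0 + N * ?X') mod N = d' 0" using digit by simp_all
  then have d0: "d 0 = d' 0" using eq by metis
  have "(d 0 + N * ?X) div N = ?X" "(d' 0 + N * ?X') div N = ?X'" using digit by simp_all
  then have "?X = ?X'" using eq by metis
  moreover have "\<forall>t<n. d (Suc t) < N" "\<forall>t<n. d' (Suc t) < N"
    using Suc.prems(1,2) by simp_all
  ultimately have IH: "\<forall>t<n. d (Suc t) = d' (Suc t)"
    using Suc.hyps[of "\<lambda>t. d (Suc t)" "\<lambda>t. d' (Suc t)"] by blast
  show ?case
  proof (intro allI impI)
    fix t assume "t < Suc n"
    then show "d t = d' t" using d0 IH by (cases t) auto
  qed
qed simp

lemma base_expansion_inj_on_finite:
  fixes pos d d' :: "'a \<Rightarrow> nat" and N :: nat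
  assumes pos: "inj pos" "range pos = {..<n}"
    and digits: "\<forall>i. d i < N" "\<forall>i. d' i < N"
    and eq: "(\<Sum>i\<in>UNIV. d i * N ^ pos i) = (\<Sum>i\<in>UNIV. d' i * N ^ pos i)"
  shows "d = d'"
proof -
  define iv where "iv = inv_into UNIV pos"
  have reindex: "(\<Sum>i\<in>UNIV. e i * N ^ pos i) = (\<Sum>t<n. e (iv t) * N ^ t)" for e :: "'a \<Rightarrow> nat"
  proof -
    have "(\<Sum>t<n. e (iv t) * N ^ t) = (\<Sum>t\<in>range pos. e (iv t) * N ^ t)"
      using pos(2) by simp
    also have "\<dots> = (\<Sum>i\<in>UNIV. e i * N ^ pos i)"
      by (subst sum.reindex) (use pos(1) in \<open>auto simp: iv_def\<close>)
    finally show ?thesis by simp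
  qed
  have "\<forall>t<n. d (iv t) = d' (iv t)"
    by (rule base_expansion_inj[where N = N]) (use digits eq[unfolded reindex] in simp_all)
  moreover have "pos i < n" for i using pos(2) by auto
  ultimately have "d (iv (pos i)) = d' (iv (pos i))" for i by blast
  then show ?thesis using pos(1) by (simp add: iv_def fun_eq_iff)
qed

lemma exponent_bound:
  fixes g :: "('k::comm_ring_1, 'n::finite) mpoly"
  obtains N :: nat where "\<And>m i. m \<in> Poly_Mapping.keys g \<Longrightarrow> Poly_Mapping.lookup m (Some i) < N"
proof
  fix m i assume m: "m \<in> Poly_Mapping.keys g"
  have "Poly_Mapping.lookup m (Some i) \<le> (\<Sum>i\<in>UNIV. Poly_Mapping.lookup m (Some i))"
    by (rule member_le_sum) auto
  also have "\<dots> \<le> (\<Sum>m\<in>Poly_Mapping.keys g. \<Sum>i\<in>UNIV. Poly_Mapping.lookup m (Some i))"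
    by (rule member_le_sum) (use m in auto)
  finally show "Poly_Mapping.lookup m (Some i) <
      Suc (\<Sum>m\<in>Poly_Mapping.keys g. \<Sum>i\<in>UNIV. Poly_Mapping.lookup m (Some i))"
    by simp
qed

text \<open>Kronecker substitution: with x_i = s^(N^(pos i)) and N exceeding every exponent of g,
  distinct monomials of g with the same t-degree get distinct powers of s, so the coefficient
  of that t-power is a nonzero polynomial in s, which has a non-root in the infinite field.\<close>

lemma exists_subst_x_nonzero:
  fixes g :: "('k::idom, 'n::finite) mpoly"
  assumes inf: "infinite (UNIV :: 'k set)" and g0: "g \<noteq> 0"
  shows "\<exists>a. subst_x a g \<noteq> 0"
proof -
  obtain pos :: "'n \<Rightarrow> nat" and n where pos: "inj pos" "range pos = {..<n}"
    using finite_imp_inj_to_nat_seg[of "UNIV :: 'n set"] by (auto simp: lessThan_def)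
  obtain N where N: "\<And>m i. m \<in> Poly_Mapping.keys g \<Longrightarrow> Poly_Mapping.lookup m (Some i) < N"
    by (rule exponent_bound[of g]) blast
  define E where "E m = (\<Sum>i\<in>UNIV. Poly_Mapping.lookup m (Some i) * N ^ pos i)" for m
  have E_inj: "m = m'"
    if "m \<in> Poly_Mapping.keys g" "m' \<in> Poly_Mapping.keys g" "E m = E m'"
      "Poly_Mapping.lookup m None = Poly_Mapping.lookup m' None" for m m'
  proof -
    have "(\<lambda>i. Poly_Mapping.lookup m (Some i)) = (\<lambda>i. Poly_Mapping.lookup m' (Some i))"
      by (rule base_expansion_inj_on_finite[OF pos]) (use that N in \<open>auto simp: E_def\<close>)
    then show ?thesis using that(4) by (intro poly_mapping_eqI) (metis option.exhaust)
  qed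
  obtain m0 where m0: "m0 \<in> Poly_Mapping.keys g" using g0 by (metis all_not_in_conv keys_eq_empty)
  define S where "S = {m \<in> Poly_Mapping.keys g. Poly_Mapping.lookup m None = Poly_Mapping.lookup m0 None}"
  define Q where "Q = (\<Sum>m\<in>S. monom (Poly_Mapping.lookup g m) (E m))"
  have "coeff Q (E m0) = (\<Sum>m\<in>S. if m = m0 then Poly_Mapping.lookup g m else 0)"
    unfolding Q_def coeff_sum
    by (rule sum.cong) (use E_inj m0 in \<open>auto simp: S_def coeff_monom\<close>)
  also have "\<dots> = Poly_Mapping.lookup g m0" using m0 by (simp add: S_def)
  finally have "Q \<noteq> 0" using m0 by (auto simp: in_keys_iff)
  then obtain s where s: "poly Q s \<noteq> 0"
    using ex_new_if_finite[OF inf poly_roots_finite] by blast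
  define a where "a i = s ^ (N ^ pos i)" for i
  have "monomial_value a m = s ^ E m" for m
    by (simp add: monomial_value_def a_def E_def power_sum power_mult[symmetric] mult.commute)
  then have "coeff (subst_x a g) (Poly_Mapping.lookup m0 None) =
      (\<Sum>m\<in>Poly_Mapping.keys g. if m \<in> S then Poly_Mapping.lookup g m * s ^ E m else 0)"
    unfolding subst_x_def coeff_sum coeff_monom monomial_value_def[symmetric] S_def
    by (intro sum.cong) auto
  also have "\<dots> = (\<Sum>m\<in>S. Poly_Mapping.lookup g m * s ^ E m)"
    unfolding S_def by (rule sum.mono_neutral_cong_right) auto
  also have "\<dots> = poly Q s" unfolding Q_def by (simp add: poly_sum poly_monom)
  finally show ?thesis using s by (metis coeff_0)
qed

section \<open>The derivation d/dt on k(t,x)\<close>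

lemma rfun_deriv_Fract:
  fixes a b :: "('k::idom,'n::linorder) mpoly"
  assumes b: "b \<noteq> 0"
  shows "rfun_deriv (Fract a b) = Fract (mpoly_deriv_t a * b - a * mpoly_deriv_t b) (b * b)"
proof -
  have well_defined: "Fract (mpoly_deriv_t a' * b' - a' * mpoly_deriv_t b') (b' * b') =
      Fract (mpoly_deriv_t a * b - a * mpoly_deriv_t b) (b * b)"
    if b': "b' \<noteq> 0" and eq: "Fract a b = Fract a' b'" for a' b'
  proof -
    let ?da = "mpoly_deriv_t a" and ?db = "mpoly_deriv_t b"
    let ?da' = "mpoly_deriv_t a'" and ?db' = "mpoly_deriv_t b'"
    have cross: "a * b' = a' * b" using eq eq_fract(1)[OF b b'] by blast
    then have "mpoly_deriv_t (a * b') = mpoly_deriv_t (a' * b)" by simp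
    then have dcross: "a * ?db' + ?da * b' = a' * ?db + ?da' * b" by (simp only: mpoly_deriv_t_mult)
    have "(?da * b - a * ?db) * (b' * b') - (?da' * b' - a' * ?db') * (b * b) =
        b * b' * ((a * ?db' + ?da * b') - (a' * ?db + ?da' * b)) - (b' * ?db + b * ?db') * (a * b' - a' * b)"
      by (simp add: algebra_simps)
    then have "(?da * b - a * ?db) * (b' * b') = (?da' * b' - a' * ?db') * (b * b)"
      using cross dcross by simp
    then show ?thesis using b b' by (simp add: eq_fract(1))
  qed
  show ?thesis
    unfolding rfun_deriv_def
    by (rule someI2[of _ "Fract (mpoly_deriv_t a * b - a * mpoly_deriv_t b) (b * b)"])
       (use b well_defined in blast)+
qed

lemma rfun_deriv_add: "rfun_deriv (x + y) = rfun_deriv x + rfun_deriv (y :: ('k::idom,'n::linorder) rfun)"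
proof (cases x, cases y)
  fix a b c e :: "('k,'n) mpoly"
  assume x: "x = Fract a b" "b \<noteq> 0" and y: "y = Fract c e" "e \<noteq> 0"
  have ring_identity: "(((a * de + da * e) + (c * db + dc * b)) * (b * e) - (a * e + c * b) * (b * de + db * e))
      * ((b * b) * (e * e)) = ((da * b - a * db) * (e * e) + (dc * e - c * de) * (b * b)) * ((b * e) * (b * e))"
    for da db dc de :: "('k,'n) mpoly"
    by (simp add: algebra_simps)
  have nz: "b * e \<noteq> 0" "b * b \<noteq> 0" "e * e \<noteq> 0" "(b * e) * (b * e) \<noteq> 0" "(b * b) * (e * e) \<noteq> 0"
    using x y by auto
  have "x + y = Fract (a * e + c * b) (b * e)" by (simp only: x y add_fract[OF x(2) y(2)])
  then have L: "rfun_deriv (x + y) = Fract (mpoly_deriv_t (a * e + c * b) * (b * e) -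
      (a * e + c * b) * mpoly_deriv_t (b * e)) ((b * e) * (b * e))"
    by (simp only: rfun_deriv_Fract[OF nz(1)])
  have R: "rfun_deriv x + rfun_deriv y = Fract ((mpoly_deriv_t a * b - a * mpoly_deriv_t b) * (e * e) +
      (mpoly_deriv_t c * e - c * mpoly_deriv_t e) * (b * b)) ((b * b) * (e * e))"
    by (simp only: x y rfun_deriv_Fract[OF x(2)] rfun_deriv_Fract[OF y(2)] add_fract[OF nz(2,3)])
  show ?thesis
    unfolding L R eq_fract(1)[OF nz(4,5)] mpoly_deriv_t_add mpoly_deriv_t_mult by (rule ring_identity)
qed

lemma rfun_deriv_mult:
  "rfun_deriv (x * y) = x * rfun_deriv y + rfun_deriv x * (y :: ('k::idom,'n::linorder) rfun)"
proof (cases x, cases y)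
  fix a b c e :: "('k,'n) mpoly"
  assume x: "x = Fract a b" "b \<noteq> 0" and y: "y = Fract c e" "e \<noteq> 0"
  have ring_identity: "((a * dc + da * c) * (b * e) - (a * c) * (b * de + db * e)) * ((b * (e * e)) * ((b * b) * e)) =
      (a * (dc * e - c * de) * ((b * b) * e) + (da * b - a * db) * c * (b * (e * e))) * ((b * e) * (b * e))"
    for da db dc de :: "('k,'n) mpoly"
    by (simp add: algebra_simps)
  have nz: "b * e \<noteq> 0" "b * (e * e) \<noteq> 0" "(b * b) * e \<noteq> 0" "(b * e) * (b * e) \<noteq> 0"
    "(b * (e * e)) * ((b * b) * e) \<noteq> 0"
    using x y by auto
  have L: "rfun_deriv (x * y) = Fract (mpoly_deriv_t (a * c) * (b * e) - (a * c) * mpoly_deriv_t (b * e))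
      ((b * e) * (b * e))"
    by (simp only: x y mult_fract rfun_deriv_Fract[OF nz(1)])
  have R: "x * rfun_deriv y + rfun_deriv x * y = Fract (a * (mpoly_deriv_t c * e - c * mpoly_deriv_t e) * ((b * b) * e) +
      (mpoly_deriv_t a * b - a * mpoly_deriv_t b) * c * (b * (e * e))) ((b * (e * e)) * ((b * b) * e))"
    by (simp only: x y rfun_deriv_Fract[OF x(2)] rfun_deriv_Fract[OF y(2)] mult_fract add_fract[OF nz(2,3)])
  show ?thesis
    unfolding L R eq_fract(1)[OF nz(4,5)] mpoly_deriv_t_add mpoly_deriv_t_mult by (rule ring_identity)
qed

interpretation rfun: differential_field "rfun_deriv :: ('k::idom,'n::linorder) rfun \<Rightarrow> _"
  by unfold_locales (rule rfun_deriv_add, rule rfun_deriv_mult)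

section \<open>Substitution on k(t)[x,1/r]\<close>

definition loc_denom :: "('k::comm_ring_1,'n) mpoly \<Rightarrow> ('k,'n) mpoly \<Rightarrow> bool" where
  "loc_denom r D \<longleftrightarrow> (\<exists>h m. h \<noteq> 0 \<and> D = t_poly h * r ^ m)"

lemma loc_denom_1: "loc_denom r 1"
  unfolding loc_denom_def by (intro exI[of _ 1] exI[of _ 0]) simp

lemma loc_denom_mult: "loc_denom r D1 \<Longrightarrow> loc_denom r D2 \<Longrightarrow> loc_denom r (D1 * D2 :: ('k::idom,'n) mpoly)"
  unfolding loc_denom_def
proof (elim exE conjE)
  fix h1 m1 h2 m2
  assume "h1 \<noteq> 0" "D1 = t_poly h1 * r ^ m1" "h2 \<noteq> 0" "D2 = t_poly h2 * r ^ m2"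
  then show "\<exists>h m. h \<noteq> 0 \<and> D1 * D2 = t_poly h * r ^ m"
    by (intro exI[of _ "h1 * h2"] exI[of _ "m1 + m2"]) (simp add: t_poly_mult power_add mult_ac)
qed

lemma loc_denom_t_poly: "h \<noteq> 0 \<Longrightarrow> loc_denom r (t_poly h)"
  unfolding loc_denom_def by (intro exI[of _ h] exI[of _ 0]) simp

lemma loc_ring_iff_Fract: "x \<in> loc_ring r \<longleftrightarrow> (\<exists>g D. loc_denom r D \<and> x = Fract g D)"
  unfolding loc_ring_def loc_denom_def by blast

lemma permutes_less_bound: "p permutes {0..<n} \<Longrightarrow> i < n \<Longrightarrow> p i < (n::nat)"
  using permutes_in_image[of p "{0..<n}" i] by simp

locale localization =
  fixes r :: "('k::idom,'n::{finite,linorder}) mpoly"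
  assumes r_nonzero: "r \<noteq> 0"
begin

lemma loc_denom_nonzero: "loc_denom r D \<Longrightarrow> D \<noteq> 0"
  unfolding loc_denom_def using r_nonzero by (auto simp: t_poly_eq_0_iff)

lemma zero_in_loc_ring: "0 \<in> loc_ring r"
  unfolding loc_ring_iff_Fract Zero_fract_def using loc_denom_1 by blast

lemma one_in_loc_ring: "1 \<in> loc_ring r"
  unfolding loc_ring_iff_Fract One_fract_def using loc_denom_1 by blast

lemma loc_ring_add: "x \<in> loc_ring r \<Longrightarrow> y \<in> loc_ring r \<Longrightarrow> x + y \<in> loc_ring r"
  unfolding loc_ring_iff_Fract
proof (elim exE conjE)
  fix g1 D1 g2 D2
  assume "loc_denom r D1" "x = Fract g1 D1" "loc_denom r D2" "y = Fract g2 D2"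
  then show "\<exists>g D. loc_denom r D \<and> x + y = Fract g D"
    by (intro exI[of _ "g1 * D2 + g2 * D1"] exI[of _ "D1 * D2"])
       (simp add: loc_denom_mult loc_denom_nonzero)
qed

lemma loc_ring_uminus: "x \<in> loc_ring r \<Longrightarrow> - x \<in> loc_ring r"
  unfolding loc_ring_iff_Fract
proof (elim exE conjE)
  fix g D assume "loc_denom r D" "x = Fract g D"
  then show "\<exists>g D. loc_denom r D \<and> - x = Fract g D" by (intro exI[of _ "- g"] exI[of _ D]) simp
qed

lemma loc_ring_mult: "x \<in> loc_ring r \<Longrightarrow> y \<in> loc_ring r \<Longrightarrow> x * y \<in> loc_ring r"
  unfolding loc_ring_iff_Fract
proof (elim exE conjE)
  fix g1 D1 g2 D2
  assume "loc_denom r D1" "x = Fract g1 D1" "loc_denom r D2" "y = Fract g2 D2"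
  then show "\<exists>g D. loc_denom r D \<and> x * y = Fract g D"
    by (intro exI[of _ "g1 * g2"] exI[of _ "D1 * D2"]) (simp add: loc_denom_mult)
qed

lemma loc_ring_rfun_deriv: "x \<in> loc_ring r \<Longrightarrow> rfun_deriv x \<in> loc_ring r"
  unfolding loc_ring_iff_Fract
proof (elim exE conjE)
  fix g D assume "loc_denom r D" "x = Fract g D"
  then show "\<exists>g D. loc_denom r D \<and> rfun_deriv x = Fract g D"
    by (intro exI[of _ "mpoly_deriv_t g * D - g * mpoly_deriv_t D"] exI[of _ "D * D"])
       (simp add: rfun_deriv_Fract loc_denom_nonzero loc_denom_mult)
qed

lemma kt_field_subset_loc_ring: "kt_field \<subseteq> loc_ring r"
proof
  fix x :: "('k,'n) rfun" assume "x \<in> kt_field"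
  then obtain a b where "b \<noteq> 0" "x = Fract (t_poly a) (t_poly b)" unfolding kt_field_def by blast
  then show "x \<in> loc_ring r" unfolding loc_ring_iff_Fract using loc_denom_t_poly by blast
qed

lemma loc_ring_sum: "(\<And>i. i \<in> S \<Longrightarrow> f i \<in> loc_ring r) \<Longrightarrow> sum f S \<in> loc_ring r"
  by (induct S rule: infinite_finite_induct) (simp_all add: zero_in_loc_ring loc_ring_add)

lemma loc_ring_prod: "(\<And>i. i \<in> S \<Longrightarrow> f i \<in> loc_ring r) \<Longrightarrow> prod f S \<in> loc_ring r"
  by (induct S rule: infinite_finite_induct) (simp_all add: one_in_loc_ring loc_ring_mult)

lemma signof_in_loc_ring: "signof p \<in> loc_ring r"
  by (simp add: sign_def one_in_loc_ring loc_ring_uminus)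

lemma coeff_dleft_pow_in_loc_ring:
  "\<forall>i. coeff X i \<in> loc_ring r \<Longrightarrow> coeff ((rfun.dleft ^^ j) X) i \<in> loc_ring r"
proof (induct j arbitrary: i)
  case (Suc j)
  then show ?case
    by (simp add: rfun.coeff_dleft loc_ring_add loc_ring_rfun_deriv zero_in_loc_ring)
qed simp

lemma det_in_loc_ring:
  assumes "M \<in> carrier_mat n n" "\<And>i j. i < n \<Longrightarrow> j < n \<Longrightarrow> M $$ (i, j) \<in> loc_ring r"
  shows "det M \<in> loc_ring r"
  unfolding det_def'[OF assms(1)]
  by (intro loc_ring_sum loc_ring_mult signof_in_loc_ring loc_ring_prod)
     (use assms(2) in \<open>auto intro: permutes_less_bound\<close>)

lemma diff_sylvester_entry_in_loc_ring:
  assumes "\<forall>i. coeff P i \<in> loc_ring r" "\<forall>i. coeff L i \<in> loc_ring r"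
    and "i < degree P + degree L" "j < degree P + degree L"
  shows "diff_sylvester rfun_deriv P L $$ (i, j) \<in> loc_ring r"
  using assms by (simp add: diff_sylvester_def coeff_dleft_pow_in_loc_ring)

lemma det_diff_sylvester_in_loc_ring:
  assumes "\<forall>i. coeff P i \<in> loc_ring r" "\<forall>i. coeff L i \<in> kt_field"
  shows "det (diff_sylvester rfun_deriv P L) \<in> loc_ring r"
  using assms kt_field_subset_loc_ring
  by (intro det_in_loc_ring[OF diff_sylvester_carrier] diff_sylvester_entry_in_loc_ring) blast+

end

locale specialization = localization r for r :: "('k::idom,'n::{finite,linorder}) mpoly" +
  fixes c :: "'n \<Rightarrow> 'k"
  assumes c_admissible: "subst_x c r \<noteq> 0"
begin

lemma subst_x_loc_denom_nonzero: "loc_denom r D \<Longrightarrow> subst_x c D \<noteq> 0"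
  unfolding loc_denom_def using c_admissible by (auto simp: subst_x_mult subst_x_power subst_x_t_poly)

lemma t_poly_subst_x_nonzero: "loc_denom r D \<Longrightarrow> (t_poly (subst_x c D) :: ('k,'n) mpoly) \<noteq> 0"
  using subst_x_loc_denom_nonzero by (simp add: t_poly_eq_0_iff)

lemma spec_Fract:
  assumes D: "loc_denom r D"
  shows "spec r c (Fract g D) = Fract (t_poly (subst_x c g)) (t_poly (subst_x c D))"
proof -
  \<comment> \<open>the value does not depend on the representative, since substitution is multiplicative
    and does not annihilate admissible denominators\<close>
  have well_defined: "Fract (t_poly (subst_x c g1)) (t_poly (h1 * subst_x c r ^ m1)) =
      (Fract (t_poly (subst_x c g)) (t_poly (subst_x c D)) :: ('k,'n) rfun)"
    if h1: "h1 \<noteq> 0" and eq: "Fract g D = Fract g1 (t_poly h1 * r ^ m1)" for g1 h1 m1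
  proof -
    define D1 where "D1 = t_poly h1 * r ^ m1"
    have D1: "loc_denom r D1" unfolding D1_def loc_denom_def using h1 by blast
    have subst_D1: "subst_x c D1 = h1 * subst_x c r ^ m1"
      unfolding D1_def by (simp add: subst_x_mult subst_x_power subst_x_t_poly)
    have "g * D1 = g1 * D"
      using eq eq_fract(1)[OF loc_denom_nonzero[OF D] loc_denom_nonzero[OF D1]] unfolding D1_def by blast
    then have "t_poly (subst_x c g1) * t_poly (subst_x c D) =
        t_poly (subst_x c g) * (t_poly (subst_x c D1) :: ('k,'n) mpoly)"
      by (metis subst_x_mult t_poly_mult)
    then have "Fract (t_poly (subst_x c g1)) (t_poly (subst_x c D1)) =
        (Fract (t_poly (subst_x c g)) (t_poly (subst_x c D)) :: ('k,'n) rfun)"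
      by (simp only: eq_fract(1)[OF t_poly_subst_x_nonzero[OF D1] t_poly_subst_x_nonzero[OF D]])
    then show ?thesis by (simp only: subst_D1)
  qed
  obtain h m where hm: "h \<noteq> 0" "D = t_poly h * r ^ m" using D unfolding loc_denom_def by blast
  show ?thesis
    unfolding spec_def
  proof (rule someI2[where a = "Fract (t_poly (subst_x c g)) (t_poly (h * subst_x c r ^ m))"])
    show "\<exists>g' h' m'. h' \<noteq> 0 \<and> Fract g D = Fract g' (t_poly h' * r ^ m') \<and>
        Fract (t_poly (subst_x c g)) (t_poly (h * subst_x c r ^ m)) =
        Fract (t_poly (subst_x c g')) (t_poly (h' * subst_x c r ^ m'))"
      using hm by blast
  qed (use well_defined in blast)
qed

lemma spec_0: "spec r c 0 = 0"
  using spec_Fract[OF loc_denom_1, of 0] by (simp add: Zero_fract_def[symmetric])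

lemma spec_1: "spec r c 1 = 1"
  using spec_Fract[OF loc_denom_1, of 1] by (simp add: One_fract_def[symmetric])

lemma spec_add:
  assumes "x \<in> loc_ring r" "y \<in> loc_ring r"
  shows "spec r c (x + y) = spec r c x + spec r c y"
proof -
  obtain g1 D1 g2 D2 where D: "loc_denom r D1" "x = Fract g1 D1" "loc_denom r D2" "y = Fract g2 D2"
    using assms unfolding loc_ring_iff_Fract by blast
  then have "x + y = Fract (g1 * D2 + g2 * D1) (D1 * D2)" by (simp add: loc_denom_nonzero)
  then show ?thesis
    using D by (simp add: spec_Fract loc_denom_mult t_poly_subst_x_nonzero subst_x_add subst_x_mult
        t_poly_add t_poly_mult)
qed

lemma spec_uminus:
  assumes "x \<in> loc_ring r"
  shows "spec r c (- x) = - spec r c x"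
proof -
  obtain g D where D: "loc_denom r D" "x = Fract g D" using assms unfolding loc_ring_iff_Fract by blast
  then have "- x = Fract (- g) D" by simp
  then show ?thesis using D by (simp add: spec_Fract subst_x_minus t_poly_minus)
qed

lemma spec_mult:
  assumes "x \<in> loc_ring r" "y \<in> loc_ring r"
  shows "spec r c (x * y) = spec r c x * spec r c y"
proof -
  obtain g1 D1 g2 D2 where D: "loc_denom r D1" "x = Fract g1 D1" "loc_denom r D2" "y = Fract g2 D2"
    using assms unfolding loc_ring_iff_Fract by blast
  then have "x * y = Fract (g1 * g2) (D1 * D2)" by simp
  then show ?thesis using D by (simp add: spec_Fract loc_denom_mult subst_x_mult t_poly_mult)
qed

lemma spec_rfun_deriv:
  assumes "x \<in> loc_ring r"
  shows "spec r c (rfun_deriv x) = rfun_deriv (spec r c x)"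
proof -
  obtain g D where D: "loc_denom r D" "x = Fract g D" using assms unfolding loc_ring_iff_Fract by blast
  then have "rfun_deriv x = Fract (mpoly_deriv_t g * D - g * mpoly_deriv_t D) (D * D)"
    by (simp add: rfun_deriv_Fract loc_denom_nonzero)
  then show ?thesis
    using D loc_denom_mult[OF D(1) D(1)]
    by (simp add: spec_Fract rfun_deriv_Fract t_poly_subst_x_nonzero subst_x_mult subst_x_diff
        t_poly_mult t_poly_diff mpoly_deriv_t_t_poly subst_x_mpoly_deriv_t)
qed

lemma spec_kt_field: "x \<in> kt_field \<Longrightarrow> spec r c x = x"
proof -
  assume "x \<in> kt_field"
  then obtain a b where "b \<noteq> 0" "x = Fract (t_poly a) (t_poly b)" unfolding kt_field_def by blast
  then show ?thesis by (simp add: spec_Fract loc_denom_t_poly subst_x_t_poly)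
qed

lemma spec_sum:
  "(\<And>i. i \<in> S \<Longrightarrow> f i \<in> loc_ring r) \<Longrightarrow> spec r c (sum f S) = (\<Sum>i\<in>S. spec r c (f i))"
  by (induct S rule: infinite_finite_induct) (simp_all add: spec_0 spec_add loc_ring_sum)

lemma spec_prod:
  "(\<And>i. i \<in> S \<Longrightarrow> f i \<in> loc_ring r) \<Longrightarrow> spec r c (prod f S) = (\<Prod>i\<in>S. spec r c (f i))"
  by (induct S rule: infinite_finite_induct) (simp_all add: spec_1 spec_mult loc_ring_prod)

lemma spec_signof: "spec r c (signof p) = signof p"
  by (simp add: sign_def spec_1 spec_uminus one_in_loc_ring)

lemma spec_det:
  assumes M: "M \<in> carrier_mat n n" and entries: "\<And>i j. i < n \<Longrightarrow> j < n \<Longrightarrow> M $$ (i, j) \<in> loc_ring r"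
  shows "det (map_mat (spec r c) M) = spec r c (det M)"
proof -
  let ?summand = "\<lambda>p. signof p * (\<Prod>i = 0..<n. M $$ (i, p i))"
  have summand: "?summand p \<in> loc_ring r \<and>
      spec r c (?summand p) = signof p * (\<Prod>i = 0..<n. spec r c (M $$ (i, p i)))"
    if p: "p permutes {0..<n}" for p
  proof -
    have row_in: "\<And>i. i \<in> {0..<n} \<Longrightarrow> M $$ (i, p i) \<in> loc_ring r"
      using entries permutes_less_bound[OF p] by simp
    have prod_in: "(\<Prod>i = 0..<n. M $$ (i, p i)) \<in> loc_ring r"
      by (rule loc_ring_prod[OF row_in])
    have spec_prod_eq: "spec r c (\<Prod>i = 0..<n. M $$ (i, p i)) = (\<Prod>i = 0..<n. spec r c (M $$ (i, p i)))"
      by (rule spec_prod[OF row_in])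
    show ?thesis
      unfolding spec_mult[OF signof_in_loc_ring prod_in] spec_signof spec_prod_eq
      using loc_ring_mult[OF signof_in_loc_ring prod_in] by blast
  qed
  have "det (map_mat (spec r c) M) =
      (\<Sum>p\<in>{p. p permutes {0..<n}}. signof p * (\<Prod>i = 0..<n. spec r c (M $$ (i, p i))))"
    unfolding det_def'[OF map_carrier_mat[THEN iffD2, OF M]]
  proof (rule sum.cong)
    fix p assume "p \<in> {p. p permutes {0..<n}}"
    then have "i < n \<Longrightarrow> p i < n" for i by (simp add: permutes_less_bound)
    then show "signof p * (\<Prod>i = 0..<n. map_mat (spec r c) M $$ (i, p i)) =
        signof p * (\<Prod>i = 0..<n. spec r c (M $$ (i, p i)))"
      using M by (auto intro!: prod.cong)
  qed simp
  also have "\<dots> = (\<Sum>p\<in>{p. p permutes {0..<n}}. spec r c (?summand p))"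
    using summand by (intro sum.cong) simp_all
  also have "\<dots> = spec r c (det M)"
    unfolding det_def'[OF M] by (rule spec_sum[symmetric]) (use summand in blast)
  finally show ?thesis .
qed

lemma coeff_spec_dop: "coeff (spec_dop r c P) k = spec r c (coeff P k)"
  by (simp add: spec_dop_def coeff_map_poly spec_0)

lemma spec_dop_dleft_pow:
  assumes "\<forall>i. coeff X i \<in> loc_ring r"
  shows "spec_dop r c ((rfun.dleft ^^ j) X) = (rfun.dleft ^^ j) (spec_dop r c X)"
proof (induct j)
  case (Suc j)
  have "spec_dop r c (rfun.dleft Y) = rfun.dleft (spec_dop r c Y)"
    if "\<forall>i. coeff Y i \<in> loc_ring r" for Y
    by (rule poly_eqI) (use that in \<open>simp add: coeff_spec_dop rfun.coeff_dleft spec_add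
        spec_rfun_deriv spec_0 loc_ring_rfun_deriv zero_in_loc_ring\<close>)
  then show ?case
    using Suc coeff_dleft_pow_in_loc_ring[OF assms, of j] by simp
qed simp

lemma degree_spec_dop: "lead_coeff P = 1 \<Longrightarrow> degree (spec_dop r c P) = degree P"
  by (rule antisym, unfold spec_dop_def, rule map_poly_degree_leq)
     (auto intro!: le_degree simp: spec_1 coeff_map_poly spec_0)

lemma lead_coeff_spec_dop: "lead_coeff P = 1 \<Longrightarrow> lead_coeff (spec_dop r c P) = 1"
  by (simp add: degree_spec_dop coeff_spec_dop spec_1)

lemma diff_sylvester_spec_dop:
  assumes P: "lead_coeff P = 1" "\<forall>i. coeff P i \<in> loc_ring r" and L: "\<forall>i. coeff L i \<in> kt_field"
  shows "diff_sylvester rfun_deriv (spec_dop r c P) L = map_mat (spec r c) (diff_sylvester rfun_deriv P L)"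
proof -
  let ?n = "degree P + degree L"
  have L_loc: "\<forall>i. coeff L i \<in> loc_ring r" using L kt_field_subset_loc_ring by blast
  have "spec_dop r c L = L"
    by (rule poly_eqI) (use L in \<open>simp add: coeff_spec_dop spec_kt_field\<close>)
  then have L_entry: "spec r c (coeff ((rfun.dleft ^^ j) L) i) = coeff ((rfun.dleft ^^ j) L) i" for i j
    using spec_dop_dleft_pow[OF L_loc, of j] by (metis coeff_spec_dop)
  have P_entry: "spec r c (coeff ((rfun.dleft ^^ j) P) i) = coeff ((rfun.dleft ^^ j) (spec_dop r c P)) i" for i j
    using spec_dop_dleft_pow[OF P(2), of j] by (metis coeff_spec_dop)
  show ?thesis
  proof (rule eq_matI)
    fix i j assume "i < dim_row (map_mat (spec r c) (diff_sylvester rfun_deriv P L))"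
      "j < dim_col (map_mat (spec r c) (diff_sylvester rfun_deriv P L))"
    then have "i < ?n" "j < ?n" by (simp_all add: diff_sylvester_def)
    then show "diff_sylvester rfun_deriv (spec_dop r c P) L $$ (i, j) =
        map_mat (spec r c) (diff_sylvester rfun_deriv P L) $$ (i, j)"
      by (simp add: diff_sylvester_def degree_spec_dop[OF P(1)] L_entry P_entry)
  qed (simp_all add: diff_sylvester_def degree_spec_dop[OF P(1)])
qed

theorem gcrd_one_spec_dop_iff:
  assumes P: "lead_coeff P = 1" "\<forall>i. coeff P i \<in> loc_ring r"
    and L: "lead_coeff L = 1" "\<forall>i. coeff L i \<in> kt_field"
  shows "is_gcrd rfun_deriv 1 (spec_dop r c P) L \<longleftrightarrow>
    spec r c (det (diff_sylvester rfun_deriv P L)) \<noteq> 0"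
proof -
  have "\<forall>i. coeff L i \<in> loc_ring r" using L(2) kt_field_subset_loc_ring by blast
  then have "det (diff_sylvester rfun_deriv (spec_dop r c P) L) = spec r c (det (diff_sylvester rfun_deriv P L))"
    unfolding diff_sylvester_spec_dop[OF P L(2)]
    by (intro spec_det[OF diff_sylvester_carrier] diff_sylvester_entry_in_loc_ring P(2))
  then show ?thesis
    using rfun.gcrd_one_iff_det_nonzero[OF lead_coeff_spec_dop[OF P(1)] L(1)] by simp
qed

end

lemma (in localization) exists_spec_nonzero:
  assumes inf: "infinite (UNIV :: 'k set)" and x: "x \<in> loc_ring r" "x \<noteq> 0"
  shows "\<exists>a. subst_x a r \<noteq> 0 \<and> spec r a x \<noteq> 0"
proof -
  obtain g D where gD: "loc_denom r D" "x = Fract g D" using x(1) unfolding loc_ring_iff_Fract by blast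
  have "g \<noteq> 0" using x(2) gD by (auto simp: Zero_fract_def eq_fract loc_denom_nonzero)
  then obtain a where "subst_x a (g * r) \<noteq> 0"
    using exists_subst_x_nonzero[OF inf, of "g * r"] r_nonzero by auto
  then have a: "subst_x a g \<noteq> 0" "subst_x a r \<noteq> 0" by (auto simp: subst_x_mult)
  interpret specialization r a by unfold_locales (fact a(2))
  have "spec r a x = Fract (t_poly (subst_x a g)) (t_poly (subst_x a D))"
    unfolding gD(2) by (rule spec_Fract[OF gD(1)])
  also have "\<dots> \<noteq> 0"
    using a(1) t_poly_subst_x_nonzero[OF gD(1)] by (simp add: Zero_fract_def eq_fract t_poly_eq_0_iff)
  finally show ?thesis using a(2) by blast
qed

theorem mainTheorem11:
  fixes P L :: "('k::{alg_closed_field,field_char_0}, 'n::{finite,linorder}) dop"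
    and r :: "('k,'n) mpoly"
    and c :: "'n \<Rightarrow> 'k"
  assumes P_monic: "lead_coeff P = 1"
    and L_monic: "lead_coeff L = 1"
    and r_nz: "r \<noteq> 0"
    and P_coeffs: "\<forall>i. coeff P i \<in> loc_ring r"
    and L_coeffs: "\<forall>i. coeff L i \<in> kt_field"
    and c_ok: "subst_x c r \<noteq> 0"
  shows "(is_gcrd rfun_deriv 1 (spec_dop r c P) L \<longrightarrow> is_gcrd rfun_deriv 1 P L) \<and>
         (is_gcrd rfun_deriv 1 P L \<longrightarrow>
            (\<exists>a. subst_x a r \<noteq> 0 \<and> is_gcrd rfun_deriv 1 (spec_dop r a P) L))"
proof -
  interpret specialization r c by unfold_locales (fact r_nz, fact c_ok)
  let ?det = "det (diff_sylvester rfun_deriv P L)"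
  have gcrd_spec_iff: "is_gcrd rfun_deriv 1 (spec_dop r a P) L \<longleftrightarrow> spec r a ?det \<noteq> 0"
    if "subst_x a r \<noteq> 0" for a
  proof -
    interpret a: specialization r a by unfold_locales (fact that)
    show ?thesis by (rule a.gcrd_one_spec_dop_iff[OF P_monic P_coeffs L_monic L_coeffs])
  qed
  have gcrd_iff: "is_gcrd rfun_deriv 1 P L \<longleftrightarrow> ?det \<noteq> 0"
    by (rule rfun.gcrd_one_iff_det_nonzero[OF P_monic L_monic])
  have good_point: "?det \<noteq> 0 \<Longrightarrow> \<exists>a. subst_x a r \<noteq> 0 \<and> spec r a ?det \<noteq> 0"
    by (rule exists_spec_nonzero[OF infinite_UNIV_char_0 det_diff_sylvester_in_loc_ring[OF P_coeffs L_coeffs]])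
  show ?thesis
    using gcrd_spec_iff[OF c_ok] gcrd_iff good_point gcrd_spec_iff spec_0 by metis
qed

end
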